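(* In the 1-sided False Positive regime, when the realized subgraph may contain cycles, any algorithm requires $\Omega(m\log m)$ queries in the worst case (over moldgraphs with $m$ edges and such realized subgraphs) to discover a realized spanning tree with constant failure probability.
   Context: Problem (graph connectivity with noisy queries): a graph $G=(V,E)$ (possibly with parallel edges), the moldgraph, with $m$ edges is given. An adversary selects an arbitrary connected spanning subgraph of $G$ to be realized. The algorithm may query an oracle on any edge $e$ (``Is $e$ realized?''), receiving ``Yes''/``No''; each query costs $1$; answers to distinct queries (including repeated queries of the same edge) are independent. Goal: output a spanning tree of $G$ all of whose edges are realized. In the 1-sided False Positive regime: for a realized edge the answer is always ``Yes''; for a non-realized edge the answer is ``Yes'' with a constant probability $p<1/2$ and ``No'' with probability $1-p$. *)

theory Defs
  imports "HOL-Probability.Probability"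
begin

text \<open>A multigraph: finite vertex set V, finite edge set E (edge identifiers, so
parallel edges are allowed), each edge has a two-element set of endpoints.\<close>
definition multigraph :: "'v set \<Rightarrow> 'e set \<Rightarrow> ('e \<Rightarrow> 'v set) \<Rightarrow> bool" where
  "multigraph V E ends \<longleftrightarrow> finite V \<and> finite E \<and>
     (\<forall>e\<in>E. ends e \<subseteq> V \<and> card (ends e) = 2)"

inductive reach :: "('e \<Rightarrow> 'v set) \<Rightarrow> 'e set \<Rightarrow> 'v \<Rightarrow> 'v \<Rightarrow> bool"
  for ends F where
  refl: "reach ends F u u"
| step: "reach ends F u v \<Longrightarrow> e \<in> F \<Longrightarrow> ends e = {v, w} \<Longrightarrow> reach ends F u w"

definition conn_spanning :: "'v set \<Rightarrow> 'e set \<Rightarrow> ('e \<Rightarrow> 'v set) \<Rightarrow> 'e set \<Rightarrow> bool" where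
  "conn_spanning V E ends F \<longleftrightarrow> F \<subseteq> E \<and> (\<forall>u\<in>V. \<forall>v\<in>V. reach ends F u v)"

definition spanning_tree :: "'v set \<Rightarrow> 'e set \<Rightarrow> ('e \<Rightarrow> 'v set) \<Rightarrow> 'e set \<Rightarrow> bool" where
  "spanning_tree V E ends T \<longleftrightarrow> conn_spanning V E ends T \<and>
     (\<forall>e\<in>T. \<forall>u v. ends e = {u, v} \<longrightarrow> \<not> reach ends (T - {e}) u v)"

text \<open>Deterministic adaptive query algorithm (decision tree): either output an
edge set, or query an edge and continue in the Yes-branch or the No-branch.\<close>
datatype 'e qtree = Output "'e set" | Ask 'e "'e qtree" "'e qtree"

fun depth :: "'e qtree \<Rightarrow> nat" where
  "depth (Output S) = 0"
| "depth (Ask e t f) = Suc (max (depth t) (depth f))"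

text \<open>Execution against realized edge set H in the 1-sided false positive regime:
realized edges always answer Yes; non-realized edges answer Yes with probability p,
independently for every query (fresh coin at every query node).\<close>
fun run :: "real \<Rightarrow> 'e set \<Rightarrow> 'e qtree \<Rightarrow> 'e set pmf" where
  "run p H (Output S) = return_pmf S"
| "run p H (Ask e t f) =
     (if e \<in> H then run p H t
      else bind_pmf (bernoulli_pmf p) (\<lambda>b. if b then run p H t else run p H f))"

text \<open>A randomized algorithm is a probability distribution over decision trees.
Its success probability on realized subgraph H: output is a spanning tree of
the moldgraph all of whose edges are realized.\<close>
definition success_prob ::
  "real \<Rightarrow> 'v set \<Rightarrow> 'e set \<Rightarrow> ('e \<Rightarrow> 'v set) \<Rightarrow> 'e qtree pmf \<Rightarrow> 'e set \<Rightarrow> real" where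
  "success_prob p V E ends A H =
     measure_pmf.prob (bind_pmf A (run p H)) {T. spanning_tree V E ends T \<and> T \<subseteq> H}"

end

theory Submission
  imports Defs
begin

(* Hard instances: a path whose n = m div 2 consecutive vertex pairs are each joined by two
   parallel edges. The adversary removes at most one edge of every pair, which gives 3^n
   connected realizations, and a correct output has to contain a realized edge of every pair.
   Averaging over these instances, it suffices to bound a single decision tree. Give the three
   states of pair i weights f = (f0, f1, f2) and the potential
     Phi f = f0 + f1 + f2 - f0 * min (ell (f1 / f0)) (ell (f2 / f0)),  ell u = max 0 (theta * ln (u / theta)).
   At a leaf, the weight of the instances on which the output is correct is at most the product
   of the potentials. A query to an edge of pair i splits the weights between the Yes- and the
   No-branch, and since a missing edge still answers Yes with probability p, the two new
   potentials add up to at most exp (theta * ln (1/p)) times the old one. Unit weights have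
   Phi = 3 - theta * ln (1/theta), and theta = 1 / (n * ln (1/p)) forces a depth of order
   n * ln n / ln (1/p). *)

section \<open>A potential for one pair of parallel edges\<close>

definition ell :: "real \<Rightarrow> real \<Rightarrow> real" where
  "ell \<theta> u = (if u \<le> \<theta> then 0 else \<theta> * ln (u / \<theta>))"

(* f s is a weight on state s of a pair of parallel edges 2i, 2i+1: state 0 means
   both edges are realized, state Suc j that edge 2i + j is not. *)
definition pair_potential :: "real \<Rightarrow> (nat \<Rightarrow> real) \<Rightarrow> real" where
  "pair_potential \<theta> f = f 0 + f 1 + f 2 -
     (if 0 < f 0 then f 0 * min (ell \<theta> (f 1 / f 0)) (ell \<theta> (f 2 / f 0)) else 0)"

lemma ell_nonneg: "0 < \<theta> \<Longrightarrow> 0 \<le> ell \<theta> u"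
  by (simp add: ell_def)

lemma ell_le:
  assumes "0 < \<theta>" "0 \<le> u"
  shows "ell \<theta> u \<le> u"
proof (cases "u \<le> \<theta>")
  case False
  then have "\<theta> * ln (u / \<theta>) \<le> \<theta> * (u / \<theta> - 1)"
    using assms by (intro mult_left_mono ln_le_minus_one) auto
  also have "\<dots> = u - \<theta>"
    using assms by (simp add: field_simps)
  finally show ?thesis
    using False assms by (simp add: ell_def)
qed (use assms in \<open>simp add: ell_def\<close>)

lemma ell_le_ell_mult:
  assumes "0 < \<theta>" "0 < p" "p < 1" "0 \<le> u"
  shows "ell \<theta> u \<le> ell \<theta> (p * u) + \<theta> * ln (1 / p)"
proof -
  have ln_p: "0 < ln (1 / p)"
    using assms by simp
  consider "u \<le> \<theta>" | "p * u \<le> \<theta>" "\<theta> < u" | "\<theta> < p * u"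
    by linarith
  then show ?thesis
  proof cases
    case 1
    then show ?thesis
      using assms ln_p ell_nonneg[of \<theta> "p * u"] by (simp add: ell_def)
  next
    case 2
    then have "u / \<theta> \<le> 1 / p"
      using assms by (simp add: field_simps)
    then have "\<theta> * ln (u / \<theta>) \<le> \<theta> * ln (1 / p)"
      using assms 2 by (intro mult_left_mono) auto
    then show ?thesis
      using 2 assms by (simp add: ell_def)
  next
    case 3
    then have "\<theta> < u"
      using mult_left_le_one_le[of u p] assms by linarith
    moreover have "ln (u / \<theta>) = ln (p * u / \<theta>) + ln (1 / p)"
      using assms 3 by (simp flip: ln_mult_pos)
    ultimately show ?thesis
      using 3 by (simp add: ell_def algebra_simps)
  qed
qed

lemma pair_potential_ge:
  assumes "0 < \<theta>" and f: "\<And>s. 0 \<le> f s"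
  shows "f 0 + f 1 \<le> pair_potential \<theta> f" "f 0 + f 2 \<le> pair_potential \<theta> f"
proof -
  have "f 0 * min (ell \<theta> (f 1 / f 0)) (ell \<theta> (f 2 / f 0)) \<le> min (f 1) (f 2)" if "0 < f 0"
  proof -
    have "f 0 * ell \<theta> (f k / f 0) \<le> f k" for k
      using mult_left_mono[OF ell_le[OF \<open>0 < \<theta>\<close>, of "f k / f 0"], of "f 0"] f that by simp
    then show ?thesis
      using that by (simp add: min_mult_distrib_left min.coboundedI1 min.coboundedI2)
  qed
  then show "f 0 + f 1 \<le> pair_potential \<theta> f" "f 0 + f 2 \<le> pair_potential \<theta> f"
    using f[of 1] f[of 2] by (auto simp: pair_potential_def)
qed

lemma pair_potential_nonneg:
  assumes "0 < \<theta>" and "\<And>s. 0 \<le> f s"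
  shows "0 \<le> pair_potential \<theta> f"
  using pair_potential_ge(1)[of \<theta> f, OF assms] assms(2)[of 0] assms(2)[of 1] by linarith

(* The Yes-branch of a query to edge 2i + j keeps all states of the pair, scaling state
   Suc j by p; the No-branch keeps only state Suc j, with weight 1 - p. *)
lemma pair_potential_query:
  assumes "0 < \<theta>" "0 < p" "p < 1" "j < 2" and f: "\<And>s. 0 \<le> f s"
  shows "pair_potential \<theta> (\<lambda>s. if s = Suc j then p * f s else f s)
       + pair_potential \<theta> (\<lambda>s. if s = Suc j then (1 - p) * f s else 0)
       \<le> exp (\<theta> * ln (1 / p)) * pair_potential \<theta> f"
proof -
  define \<mu> where "\<mu> = \<theta> * ln (1 / p)"
  define g where "g = (\<lambda>s. if s = Suc j then p * f s else f s)"
  define loss where "loss h = min (ell \<theta> (h 1 / f 0)) (ell \<theta> (h 2 / f 0))" for h :: "nat \<Rightarrow> real"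
  have "0 \<le> \<mu>"
    using assms by (simp add: \<mu>_def)
  have sum: "pair_potential \<theta> g + pair_potential \<theta> (\<lambda>s. if s = Suc j then (1 - p) * f s else 0)
      = f 0 + f 1 + f 2 - (if 0 < f 0 then f 0 * loss g else 0)"
    using \<open>j < 2\<close> by (auto simp: pair_potential_def g_def loss_def less_2_cases_iff algebra_simps)
  have "f 0 * loss f \<le> f 0 * loss g + \<mu> * f 0" if "0 < f 0"
  proof -
    have "ell \<theta> (f k / f 0) \<le> ell \<theta> (g k / f 0) + \<mu>" for k
    proof (cases "k = Suc j")
      case True
      then show ?thesis
        using ell_le_ell_mult[of \<theta> p "f k / f 0"] assms that by (simp add: g_def \<mu>_def)
    qed (simp add: g_def \<open>0 \<le> \<mu>\<close>)
    then have "loss f \<le> loss g + \<mu>"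
      unfolding loss_def by (smt (verit))
    from mult_left_mono[OF this, of "f 0"] that show ?thesis
      by (simp add: algebra_simps)
  qed
  then have "pair_potential \<theta> g + pair_potential \<theta> (\<lambda>s. if s = Suc j then (1 - p) * f s else 0)
      \<le> pair_potential \<theta> f + \<mu> * f 0"
    unfolding sum using f[of 0] \<open>0 \<le> \<mu>\<close> by (auto simp: pair_potential_def loss_def)
  also have "\<dots> \<le> (1 + \<mu>) * pair_potential \<theta> f"
    using pair_potential_ge(1)[of \<theta> f, OF \<open>0 < \<theta>\<close> f] f[of 1] \<open>0 \<le> \<mu>\<close>
    by (simp add: algebra_simps mult_left_mono)
  also have "\<dots> \<le> exp \<mu> * pair_potential \<theta> f"
    using pair_potential_nonneg[of \<theta> f, OF \<open>0 < \<theta>\<close> f] by (intro mult_right_mono exp_ge_add_one_self)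
  finally show ?thesis
    by (simp add: g_def \<mu>_def)
qed

section \<open>Weighted success of a decision tree\<close>

(* \<sigma> i is the state of the i-th pair of parallel edges, encoded as in pair_potential. *)
definition configs :: "nat \<Rightarrow> (nat \<Rightarrow> nat) set" where
  "configs n = {..<n} \<rightarrow>\<^sub>E {0, 1, 2}"

lemma card_configs: "card (configs n) = 3 ^ n"
  unfolding configs_def by (subst card_PiE) (auto simp: numeral_eq_Suc)

lemma prob_bind_pmf:
  "measure_pmf.prob (bind_pmf M f) X = (\<integral>x. measure_pmf.prob (f x) X \<partial>measure_pmf M)"
  unfolding measure_pmf_bind
  by (rule measure_pmf.measure_bind[where N = "count_space UNIV"])
    (auto simp: measure_pmf_in_subprob_algebra)

lemma prob_run_Ask:
  assumes "0 \<le> p" "p \<le> 1"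
  shows "measure_pmf.prob (run p H (Ask e t f)) X =
    (if e \<in> H then measure_pmf.prob (run p H t) X
     else p * measure_pmf.prob (run p H t) X + (1 - p) * measure_pmf.prob (run p H f) X)"
  using assms by (simp add: prob_bind_pmf)

lemma success_prob_eq_integral:
  "success_prob p V E ends A H =
     (\<integral>t. measure_pmf.prob (run p H t) {T. spanning_tree V E ends T \<and> T \<subseteq> H} \<partial>measure_pmf A)"
  unfolding success_prob_def by (rule prob_bind_pmf)

lemma prod_fun_upd_remove:
  assumes "finite A" "i \<in> A"
  shows "(\<Prod>k\<in>A. h k ((w(i := g)) k)) = h i g * (\<Prod>k\<in>A - {i}. h k (w k))"
  using assms by (simp add: prod.remove)

locale paired_instances =
  fixes p :: real and n :: nat
    and H :: "(nat \<Rightarrow> nat) \<Rightarrow> nat set" and G :: "(nat \<Rightarrow> nat) \<Rightarrow> nat set set"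
  assumes p_pos: "0 < p" and p_less_1: "p < 1"
    and pair_edge: "\<And>i j \<sigma>. i < n \<Longrightarrow> j < 2 \<Longrightarrow> \<sigma> \<in> configs n \<Longrightarrow> 2 * i + j \<in> H \<sigma> \<longleftrightarrow> \<sigma> i \<noteq> Suc j"
    and fixed_edge: "\<And>e. n \<le> e div 2 \<Longrightarrow> (\<forall>\<sigma>\<in>configs n. e \<in> H \<sigma>) \<or> (\<forall>\<sigma>\<in>configs n. e \<notin> H \<sigma>)"
    and covers_pairs: "\<And>\<sigma> S. \<sigma> \<in> configs n \<Longrightarrow> S \<in> G \<sigma> \<Longrightarrow> S \<subseteq> H \<sigma> \<and> (\<forall>i<n. 2 * i \<in> S \<or> Suc (2 * i) \<in> S)"
begin

definition weighted_success :: "nat qtree \<Rightarrow> (nat \<Rightarrow> nat \<Rightarrow> real) \<Rightarrow> real" where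
  "weighted_success t w =
     (\<Sum>\<sigma>\<in>configs n. (\<Prod>i<n. w i (\<sigma> i)) * measure_pmf.prob (run p (H \<sigma>) t) (G \<sigma>))"

lemma weighted_correct_le_potential:
  assumes "0 < \<theta>" and w: "\<And>i s. 0 \<le> w i s"
  shows "(\<Sum>\<sigma>\<in>configs n. (\<Prod>i<n. w i (\<sigma> i)) * indicator (G \<sigma>) S) \<le> (\<Prod>i<n. pair_potential \<theta> (w i))"
proof -
  define c where "c i = (if 2 * i \<in> S then 0 else 1 :: nat)" for i
  define g where "g i s = (if s = Suc (c i) then 0 else w i s)" for i s
  have "(\<Prod>i<n. w i (\<sigma> i)) * indicator (G \<sigma>) S \<le> (\<Prod>i<n. g i (\<sigma> i))" if \<sigma>: "\<sigma> \<in> configs n" for \<sigma>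
  proof (cases "S \<in> G \<sigma>")
    case True
    have "\<sigma> i \<noteq> Suc (c i)" if "i < n" for i
    proof -
      have "2 * i + c i \<in> S"
        using covers_pairs[OF \<sigma> True] that by (auto simp: c_def)
      then show ?thesis
        using covers_pairs[OF \<sigma> True] pair_edge[OF that _ \<sigma>, of "c i"] by (auto simp: c_def)
    qed
    then show ?thesis
      using True by (simp add: g_def)
  qed (simp add: g_def w prod_nonneg)
  then have "(\<Sum>\<sigma>\<in>configs n. (\<Prod>i<n. w i (\<sigma> i)) * indicator (G \<sigma>) S) \<le> (\<Sum>\<sigma>\<in>configs n. \<Prod>i<n. g i (\<sigma> i))"
    by (rule sum_mono)
  also have "\<dots> = (\<Prod>i<n. \<Sum>s\<in>{0, 1, 2}. g i s)"
    unfolding configs_def by (rule prod_sum_PiE[symmetric]) auto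
  also have "\<dots> \<le> (\<Prod>i<n. pair_potential \<theta> (w i))"
  proof (rule prod_mono)
    fix i
    show "0 \<le> (\<Sum>s\<in>{0, 1, 2}. g i s) \<and> (\<Sum>s\<in>{0, 1, 2}. g i s) \<le> pair_potential \<theta> (w i)"
      using pair_potential_ge[of \<theta> "w i", OF \<open>0 < \<theta>\<close> w] w[of i]
      by (auto simp: g_def c_def)
  qed
  finally show ?thesis .
qed

lemma weighted_success_Ask_pair:
  assumes "i < n" "j < 2"
  shows "weighted_success (Ask (2 * i + j) t1 t2) w =
      weighted_success t1 (w(i := \<lambda>s. if s = Suc j then p * w i s else w i s))
    + weighted_success t2 (w(i := \<lambda>s. if s = Suc j then (1 - p) * w i s else 0))"
proof -
  let ?P = "\<lambda>\<sigma> t. measure_pmf.prob (run p (H \<sigma>) t) (G \<sigma>)"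
  have upd: "(\<Prod>k<n. (w(i := g)) k (\<sigma> k)) = g (\<sigma> i) * (\<Prod>k\<in>{..<n} - {i}. w k (\<sigma> k))" for g \<sigma>
    using prod_fun_upd_remove[of "{..<n}" i "\<lambda>k x. x (\<sigma> k)"] \<open>i < n\<close> by simp
  have "(\<Prod>k<n. w k (\<sigma> k)) * ?P \<sigma> (Ask (2 * i + j) t1 t2)
      = (\<Prod>k<n. (w(i := \<lambda>s. if s = Suc j then p * w i s else w i s)) k (\<sigma> k)) * ?P \<sigma> t1
      + (\<Prod>k<n. (w(i := \<lambda>s. if s = Suc j then (1 - p) * w i s else 0)) k (\<sigma> k)) * ?P \<sigma> t2"
    if "\<sigma> \<in> configs n" for \<sigma>
    unfolding upd using pair_edge[OF assms that] p_pos p_less_1 \<open>i < n\<close>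
    by (simp add: prob_run_Ask prod.remove[of "{..<n}" i] algebra_simps del: run.simps(2))
  then show ?thesis
    unfolding weighted_success_def sum.distrib[symmetric] by (rule sum.cong[OF HOL.refl])
qed

lemma weighted_success_Ask_fixed_le:
  assumes "n \<le> e div 2" and "weighted_success t1 w \<le> B" "weighted_success t2 w \<le> B"
  shows "weighted_success (Ask e t1 t2) w \<le> B"
proof -
  let ?P = "\<lambda>\<sigma> t. measure_pmf.prob (run p (H \<sigma>) t) (G \<sigma>)"
  have prob_Ask: "?P \<sigma> (Ask e t1 t2) = (if e \<in> H \<sigma> then ?P \<sigma> t1 else p * ?P \<sigma> t1 + (1 - p) * ?P \<sigma> t2)"
    for \<sigma>
    using p_pos p_less_1 by (intro prob_run_Ask) auto
  from fixed_edge[OF assms(1)] show ?thesis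
  proof
    assume "\<forall>\<sigma>\<in>configs n. e \<in> H \<sigma>"
    then have "weighted_success (Ask e t1 t2) w = weighted_success t1 w"
      unfolding weighted_success_def prob_Ask by (intro sum.cong) auto
    then show ?thesis
      using assms(2) by simp
  next
    assume "\<forall>\<sigma>\<in>configs n. e \<notin> H \<sigma>"
    then have "weighted_success (Ask e t1 t2) w = p * weighted_success t1 w + (1 - p) * weighted_success t2 w"
      unfolding weighted_success_def prob_Ask sum_distrib_left sum.distrib[symmetric]
      by (intro sum.cong) (auto simp: algebra_simps)
    then show ?thesis
      using assms(2,3) p_pos p_less_1 by (simp add: convex_bound_le)
  qed
qed

definition potential :: "real \<Rightarrow> (nat \<Rightarrow> nat \<Rightarrow> real) \<Rightarrow> real" where
  "potential \<theta> w = (\<Prod>i<n. pair_potential \<theta> (w i))"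

lemma potential_nonneg: "0 < \<theta> \<Longrightarrow> (\<And>i s. 0 \<le> w i s) \<Longrightarrow> 0 \<le> potential \<theta> w"
  unfolding potential_def by (intro prod_nonneg pair_potential_nonneg) auto

lemma potential_fun_upd:
  "i < n \<Longrightarrow> potential \<theta> (w(i := g)) = pair_potential \<theta> g * (\<Prod>k\<in>{..<n} - {i}. pair_potential \<theta> (w k))"
  unfolding potential_def using prod_fun_upd_remove[of "{..<n}" i "\<lambda>_. pair_potential \<theta>"] by simp

lemma weighted_success_Ask_pair_le:
  assumes "0 < \<theta>" "i < n" "j < 2" and w: "\<And>i s. 0 \<le> w i s" and "0 \<le> C"
    and IH: "\<And>t w'. t \<in> {t1, t2} \<Longrightarrow> (\<And>i s. 0 \<le> w' i s) \<Longrightarrow> weighted_success t w' \<le> C * potential \<theta> w'"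
  shows "weighted_success (Ask (2 * i + j) t1 t2) w \<le> exp (\<theta> * ln (1 / p)) * (C * potential \<theta> w)"
proof -
  define g1 g2 where "g1 = (\<lambda>s. if s = Suc j then p * w i s else w i s)"
    and "g2 = (\<lambda>s. if s = Suc j then (1 - p) * w i s else 0)"
  let ?rest = "\<Prod>k\<in>{..<n} - {i}. pair_potential \<theta> (w k)"
  have g: "0 \<le> (w(i := g1)) k s" "0 \<le> (w(i := g2)) k s" for k s
    using w p_pos p_less_1 by (auto simp: g1_def g2_def)
  have "weighted_success (Ask (2 * i + j) t1 t2) w
      = weighted_success t1 (w(i := g1)) + weighted_success t2 (w(i := g2))"
    unfolding g1_def g2_def by (rule weighted_success_Ask_pair[OF \<open>i < n\<close> \<open>j < 2\<close>])
  also have "\<dots> \<le> C * potential \<theta> (w(i := g1)) + C * potential \<theta> (w(i := g2))"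
    by (intro add_mono IH g) auto
  also have "\<dots> = C * ((pair_potential \<theta> g1 + pair_potential \<theta> g2) * ?rest)"
    unfolding potential_fun_upd[OF \<open>i < n\<close>] by (simp only: distrib_left distrib_right)
  also have "\<dots> \<le> C * ((exp (\<theta> * ln (1 / p)) * pair_potential \<theta> (w i)) * ?rest)"
  proof -
    have "pair_potential \<theta> g1 + pair_potential \<theta> g2 \<le> exp (\<theta> * ln (1 / p)) * pair_potential \<theta> (w i)"
      unfolding g1_def g2_def by (rule pair_potential_query[OF \<open>0 < \<theta>\<close> p_pos p_less_1 \<open>j < 2\<close> w])
    moreover have "0 \<le> ?rest"
      using \<open>0 < \<theta>\<close> w by (intro prod_nonneg pair_potential_nonneg) auto
    ultimately show ?thesis
      using \<open>0 \<le> C\<close> by (intro mult_left_mono mult_right_mono) auto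
  qed
  also have "\<dots> = exp (\<theta> * ln (1 / p)) * (C * potential \<theta> w)"
    using potential_fun_upd[OF \<open>i < n\<close>, of \<theta> w "w i"] by simp
  finally show ?thesis .
qed

lemma weighted_success_le_potential:
  assumes "0 < \<theta>" and "\<And>i s. 0 \<le> w i s"
  shows "weighted_success t w \<le> exp (\<theta> * ln (1 / p) * depth t) * potential \<theta> w"
  using assms(2)
proof (induction t arbitrary: w)
  case (Output S)
  then show ?case
    using weighted_correct_le_potential[OF \<open>0 < \<theta>\<close>] by (simp add: weighted_success_def potential_def)
next
  case (Ask e t1 t2)
  define \<mu> where "\<mu> = \<theta> * ln (1 / p)"
  define C where "C = exp (\<mu> * max (depth t1) (depth t2))"
  have "0 \<le> \<mu>"
    using \<open>0 < \<theta>\<close> p_pos p_less_1 by (simp add: \<mu>_def)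
  have IH: "weighted_success t w' \<le> C * potential \<theta> w'"
    if "t \<in> {t1, t2}" and w': "\<And>i s. 0 \<le> w' i s" for t w'
  proof -
    have "weighted_success t w' \<le> exp (\<mu> * depth t) * potential \<theta> w'"
      using that(1) Ask.IH(1)[of w', OF w'] Ask.IH(2)[of w', OF w'] by (auto simp: \<mu>_def)
    also have "\<dots> \<le> C * potential \<theta> w'"
      using that(1) \<open>0 \<le> \<mu>\<close> potential_nonneg[of \<theta> w', OF \<open>0 < \<theta>\<close> w']
      by (intro mult_right_mono) (auto simp: C_def intro!: mult_left_mono)
    finally show ?thesis .
  qed
  have "weighted_success (Ask e t1 t2) w \<le> exp \<mu> * (C * potential \<theta> w)"
  proof (cases "e div 2 < n")
    case True
    define i j where "i = e div 2" and "j = e mod 2"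
    have "e = 2 * i + j" "i < n" "j < 2"
      using True by (auto simp: i_def j_def)
    moreover have "0 \<le> C"
      by (simp add: C_def)
    ultimately show ?thesis
      unfolding \<mu>_def using weighted_success_Ask_pair_le[of \<theta> i j w C t1 t2, OF \<open>0 < \<theta>\<close> _ _ Ask.prems _ IH]
      by simp
  next
    case False
    then have "weighted_success (Ask e t1 t2) w \<le> C * potential \<theta> w"
      using IH[of t1 w] IH[of t2 w] Ask.prems by (intro weighted_success_Ask_fixed_le) auto
    also have "\<dots> \<le> exp \<mu> * (C * potential \<theta> w)"
      using \<open>0 \<le> \<mu>\<close> potential_nonneg[of \<theta> w, OF \<open>0 < \<theta>\<close> Ask.prems]
        mult_right_mono[of 1 "exp \<mu>" "C * potential \<theta> w"]
      by (simp add: C_def)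
    finally show ?thesis .
  qed
  also have "exp \<mu> * (C * potential \<theta> w) = exp (\<mu> * depth (Ask e t1 t2)) * potential \<theta> w"
    by (simp add: C_def distrib_left exp_add)
  finally show ?case
    unfolding \<mu>_def .
qed

lemma success_le_potential:
  assumes "0 < \<theta>" and depth: "\<forall>t\<in>set_pmf A. depth t \<le> q"
    and success: "\<And>\<sigma>. \<sigma> \<in> configs n \<Longrightarrow> s \<le> (\<integral>t. measure_pmf.prob (run p (H \<sigma>) t) (G \<sigma>) \<partial>A)"
  shows "s * 3 ^ n \<le> exp (\<theta> * ln (1 / p) * q) * pair_potential \<theta> (\<lambda>_. 1) ^ n"
proof -
  let ?P = "\<lambda>\<sigma> t. measure_pmf.prob (run p (H \<sigma>) t) (G \<sigma>)"
  have integrable: "integrable (measure_pmf A) (?P \<sigma>)" for \<sigma>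
    by (rule measure_pmf.integrable_const_bound[where B = 1]) auto
  have "s * 3 ^ n = (\<Sum>\<sigma>\<in>configs n. s)"
    by (simp add: card_configs)
  also have "\<dots> \<le> (\<Sum>\<sigma>\<in>configs n. \<integral>t. ?P \<sigma> t \<partial>A)"
    by (rule sum_mono) (rule success)
  also have "\<dots> = (\<integral>t. weighted_success t (\<lambda>_ _. 1) \<partial>A)"
    unfolding weighted_success_def using integrable by (simp add: Bochner_Integration.integral_sum)
  also have "\<dots> \<le> exp (\<theta> * ln (1 / p) * q) * pair_potential \<theta> (\<lambda>_. 1) ^ n"
  proof (rule measure_pmf.integral_le_const)
    show "integrable (measure_pmf A) (\<lambda>t. weighted_success t (\<lambda>_ _. 1))"
      unfolding weighted_success_def using integrable by simp
    have "weighted_success t (\<lambda>_ _. 1) \<le> exp (\<theta> * ln (1 / p) * q) * pair_potential \<theta> (\<lambda>_. 1) ^ n"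
      if "t \<in> set_pmf A" for t
    proof -
      have "weighted_success t (\<lambda>_ _. 1) \<le> exp (\<theta> * ln (1 / p) * depth t) * pair_potential \<theta> (\<lambda>_. 1) ^ n"
        using weighted_success_le_potential[OF \<open>0 < \<theta>\<close>, of "\<lambda>_ _. 1" t] by (simp add: potential_def)
      also have "\<dots> \<le> exp (\<theta> * ln (1 / p) * q) * pair_potential \<theta> (\<lambda>_. 1) ^ n"
        using depth that \<open>0 < \<theta>\<close> p_pos p_less_1 pair_potential_nonneg[OF \<open>0 < \<theta>\<close>, of "\<lambda>_. 1"]
        by (intro mult_right_mono) (auto intro!: mult_left_mono)
      finally show ?thesis .
    qed
    then show "AE t in measure_pmf A. weighted_success t (\<lambda>_ _. 1) \<le> exp (\<theta> * ln (1 / p) * q) * pair_potential \<theta> (\<lambda>_. 1) ^ n"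
      by (rule AE_pmfI)
  qed
  finally show ?thesis .
qed

end

lemma reach_trans: "reach ends F v w \<Longrightarrow> reach ends F u v \<Longrightarrow> reach ends F u w"
  by (induction rule: reach.induct) (auto intro: reach.step)

lemma reach_sym: "reach ends F u v \<Longrightarrow> reach ends F v u"
proof (induction rule: reach.induct)
  case (step u v e w)
  have "ends e = {w, v}"
    using \<open>ends e = {v, w}\<close> by (simp add: insert_commute)
  then have "reach ends F w v"
    by (rule reach.step[OF reach.refl \<open>e \<in> F\<close>])
  with step.IH show ?case
    by (rule reach_trans)
qed (rule reach.refl)

lemma conn_spanningI:
  assumes "F \<subseteq> E" and "\<And>v. v \<in> V \<Longrightarrow> reach ends F r v"
  shows "conn_spanning V E ends F"
  using assms reach_trans reach_sym unfolding conn_spanning_def by metis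

section \<open>The doubled path\<close>

(* Edge e joins e div 2 and e div 2 + 1, so edges 2i and 2i+1 are parallel; for odd m
   the last edge m - 1 has no parallel copy. *)
definition dpath_ends :: "nat \<Rightarrow> nat set" where
  "dpath_ends e = {e div 2, Suc (e div 2)}"

definition dpath_V :: "nat \<Rightarrow> nat set" where
  "dpath_V m = {0..Suc ((m - 1) div 2)}"

definition dpath_E :: "nat \<Rightarrow> nat set" where
  "dpath_E m = {..<m}"

definition dpath_realized :: "nat \<Rightarrow> (nat \<Rightarrow> nat) \<Rightarrow> nat set" where
  "dpath_realized m \<sigma> = {e. e < m \<and> \<not> (e div 2 < m div 2 \<and> \<sigma> (e div 2) = Suc (e mod 2))}"

lemma dpath_multigraph: "multigraph (dpath_V m) (dpath_E m) dpath_ends"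
  unfolding multigraph_def dpath_V_def dpath_E_def dpath_ends_def
proof (intro conjI ballI)
  fix e assume "e \<in> {..<m}"
  then have "e div 2 \<le> (m - 1) div 2"
    by (intro div_le_mono) auto
  then show "{e div 2, Suc (e div 2)} \<subseteq> {0..Suc ((m - 1) div 2)}"
    by auto
qed auto

lemma reach_dpath_from_0:
  assumes "\<And>k. k < v \<Longrightarrow> \<exists>e\<in>F. dpath_ends e = {k, Suc k}"
  shows "reach dpath_ends F 0 v"
  using assms by (induction v) (auto intro: reach.refl reach.step)

lemma dpath_realized_conn_spanning:
  assumes "1 \<le> m"
  shows "conn_spanning (dpath_V m) (dpath_E m) dpath_ends (dpath_realized m \<sigma>)"
proof (rule conn_spanningI)
  show "dpath_realized m \<sigma> \<subseteq> dpath_E m"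
    by (auto simp: dpath_realized_def dpath_E_def)
  fix v assume "v \<in> dpath_V m"
  show "reach dpath_ends (dpath_realized m \<sigma>) 0 v"
  proof (rule reach_dpath_from_0)
    fix k assume "k < v"
    define e where "e = (if k < m div 2 \<and> \<sigma> k = 1 then 2 * k + 1 else 2 * k)"
    have "e div 2 = k" "e < m"
      using \<open>k < v\<close> \<open>v \<in> dpath_V m\<close> assms by (auto simp: e_def dpath_V_def)
    moreover have "\<not> (k < m div 2 \<and> \<sigma> k = Suc (e mod 2))"
      by (auto simp: e_def)
    ultimately show "\<exists>e\<in>dpath_realized m \<sigma>. dpath_ends e = {k, Suc k}"
      by (auto simp: dpath_realized_def dpath_ends_def)
  qed
qed

lemma dpath_realized_pair:
  assumes "i < m div 2" "j < 2"
  shows "2 * i + j \<in> dpath_realized m \<sigma> \<longleftrightarrow> \<sigma> i \<noteq> Suc j"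
proof -
  have "(2 * i + j) div 2 = i" "(2 * i + j) mod 2 = j" "2 * i + j < m"
    using assms by auto
  then show ?thesis
    using assms by (auto simp: dpath_realized_def)
qed

lemma dpath_realized_fixed: "m div 2 \<le> e div 2 \<Longrightarrow> e \<in> dpath_realized m \<sigma> \<longleftrightarrow> e < m"
  by (auto simp: dpath_realized_def)

lemma reach_dpath_stays_below:
  assumes "2 * i \<notin> S" "Suc (2 * i) \<notin> S"
  shows "reach dpath_ends S u v \<Longrightarrow> u \<le> i \<Longrightarrow> v \<le> i"
proof (induction rule: reach.induct)
  case (step u v e w)
  show ?case
  proof (rule ccontr)
    assume "\<not> w \<le> i"
    with step have "v = e div 2" "w = Suc (e div 2)" "v \<le> i"
      by (auto simp: dpath_ends_def doubleton_eq_iff)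
    then have "e = 2 * i \<or> e = Suc (2 * i)"
      using \<open>\<not> w \<le> i\<close> by auto
    then show False
      using \<open>e \<in> S\<close> assms by auto
  qed
qed

lemma conn_spanning_dpath_covers_pair:
  assumes "conn_spanning (dpath_V m) E dpath_ends S" "i < m div 2"
  shows "2 * i \<in> S \<or> Suc (2 * i) \<in> S"
proof (rule ccontr)
  assume "\<not> (2 * i \<in> S \<or> Suc (2 * i) \<in> S)"
  moreover have "i \<le> (m - 1) div 2"
    using assms(2) by presburger
  then have "reach dpath_ends S 0 (Suc i)"
    using assms(1) by (simp add: conn_spanning_def dpath_V_def)
  ultimately show False
    using reach_dpath_stays_below[of i S 0 "Suc i"] by auto
qed

lemma paired_instances_dpath:
  assumes "0 < p" "p < 1"
  shows "paired_instances p (m div 2) (dpath_realized m)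
    (\<lambda>\<sigma>. {T. spanning_tree (dpath_V m) (dpath_E m) dpath_ends T \<and> T \<subseteq> dpath_realized m \<sigma>})"
proof unfold_locales
  fix \<sigma> S
  assume "S \<in> {T. spanning_tree (dpath_V m) (dpath_E m) dpath_ends T \<and> T \<subseteq> dpath_realized m \<sigma>}"
  then show "S \<subseteq> dpath_realized m \<sigma> \<and> (\<forall>i<m div 2. 2 * i \<in> S \<or> Suc (2 * i) \<in> S)"
    using conn_spanning_dpath_covers_pair[of m "dpath_E m" S] by (auto simp: spanning_tree_def)
qed (use assms dpath_realized_pair dpath_realized_fixed in auto)

section \<open>The lower bound\<close>

lemma pair_potential_unit:
  assumes "0 < \<theta>" "\<theta> < 1"
  shows "pair_potential \<theta> (\<lambda>_. 1) = 3 - \<theta> * ln (1 / \<theta>)"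
  using assms by (simp add: pair_potential_def ell_def)

lemma queries_ge_of_potential_bound:
  fixes n :: nat and l q :: real
  assumes "0 < l" "2 \<le> n * l"
    and bound: "1 / 2 * 3 ^ n \<le> exp (q / n) * (3 - ln (n * l) / (n * l)) ^ n"
  shows "n * (ln (n * l) / (3 * l) - ln 2) \<le> q"
proof -
  define L where "L = ln (n * l) / (n * l)"
  have "0 < n"
    using assms by (cases n) auto
  have "L \<le> 1"
    using ln_le_minus_one[of "n * l"] assms by (simp add: L_def)
  have "(3 - L) ^ n = 3 ^ n * (1 - L / 3) ^ n"
    by (simp flip: power_mult_distrib)
  also have "\<dots> \<le> 3 ^ n * exp (- L / 3) ^ n"
    using \<open>L \<le> 1\<close> exp_ge_add_one_self[of "- L / 3"] by (intro mult_left_mono power_mono) auto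
  also have "exp (- L / 3) ^ n = exp (- (n * L / 3))"
    by (simp flip: exp_of_nat_mult)
  finally have "(3 - L) ^ n \<le> 3 ^ n * exp (- (n * L / 3))" .
  then have "1 / 2 * 3 ^ n \<le> exp (q / n) * (3 ^ n * exp (- (n * L / 3)))"
    using bound unfolding L_def[symmetric] by (meson exp_ge_zero mult_left_mono order_trans)
  also have "\<dots> = exp (q / n + - (n * L / 3)) * 3 ^ n"
    by (simp only: exp_add mult_ac)
  finally have "1 / 2 \<le> exp (q / n + - (n * L / 3))"
    by simp
  then have "ln (1 / 2) \<le> q / n + - (n * L / 3)"
    using ln_mono[of "1 / 2"] by fastforce
  then have "- ln 2 \<le> q / n + - (n * L / 3)"
    by (simp add: ln_div)
  moreover have "ln (n * l) / (3 * l) = n * L / 3"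
    using \<open>0 < n\<close> by (simp add: L_def)
  ultimately have "ln (n * l) / (3 * l) - ln 2 \<le> q / n"
    by linarith
  from mult_left_mono[OF this, of n] show ?thesis
    using \<open>0 < n\<close> by simp
qed

lemma m_ln_m_le_of_n_ln_bound:
  fixes l n m q :: real
  assumes "0 < l" and "1 / l^2 \<le> n" and "2 / l \<le> n" and "12 * l \<le> ln n"
    and "9 \<le> m" and "(m - 1) / 2 \<le> n"
    and q: "n * (ln (n * l) / (3 * l) - ln 2) \<le> q"
  shows "1 / (72 * l) * m * ln m \<le> q"
proof -
  have "0 < 2 / l"
    using assms(1) by simp
  then have "0 < n"
    using assms(3) by linarith
  have "ln (1 / l^2) \<le> ln n"
    using assms(1) by (intro ln_mono[OF assms(2)]) simp
  then have "- ln n \<le> 2 * ln l"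
    using assms(1) by (simp add: ln_div ln_realpow)
  then have "ln n / 2 \<le> ln (n * l)"
    using \<open>0 < n\<close> assms(1) by (simp add: ln_mult_pos)
  moreover have "ln 2 * (12 * l) \<le> 12 * l"
    using ln_2_less_1 assms(1) by (intro mult_left_le_one_le) auto
  then have "ln 2 * (12 * l) \<le> ln n"
    using assms(4) by linarith
  then have "ln 2 \<le> ln n / (12 * l)"
    using assms(1) by (subst pos_le_divide_eq) auto
  ultimately have "ln n / (12 * l) \<le> ln (n * l) / (3 * l) - ln 2"
    using assms(1) by (simp add: field_simps)
  then have bound: "n * ln n / (12 * l) \<le> q"
    using mult_left_mono[of _ _ n] \<open>0 < n\<close> q by fastforce
  have "m / 3 \<le> n"
    using assms(5,6) by simp
  have "ln m / 2 \<le> ln n"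
  proof -
    have "ln (m / 3) \<le> ln n" "ln 9 \<le> ln m"
      using \<open>m / 3 \<le> n\<close> assms(5) by (auto intro: ln_mono)
    moreover have "ln (9 :: real) = 2 * ln 3"
      using ln_realpow[of 3 2] by simp
    ultimately show ?thesis
      using assms(5) by (simp add: ln_div)
  qed
  then have "(m / 3) * (ln m / 2) \<le> n * ln n"
    using \<open>m / 3 \<le> n\<close> assms(5) by (intro mult_mono) auto
  then show ?thesis
    using bound assms(1) by (simp add: field_simps)
qed

lemma dpath_success_le_potential:
  fixes m q :: nat and A :: "nat qtree pmf"
  assumes "0 < p" "p < 1" "0 < \<theta>" "1 \<le> m"
    and depth: "\<forall>t\<in>set_pmf A. depth t \<le> q"
    and success: "\<forall>H. conn_spanning (dpath_V m) (dpath_E m) dpath_ends H \<longrightarrow>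
      s \<le> success_prob p (dpath_V m) (dpath_E m) dpath_ends A H"
  shows "s * 3 ^ (m div 2) \<le> exp (\<theta> * ln (1 / p) * q) * pair_potential \<theta> (\<lambda>_. 1) ^ (m div 2)"
proof -
  interpret paired_instances p "m div 2" "dpath_realized m"
    "\<lambda>\<sigma>. {T. spanning_tree (dpath_V m) (dpath_E m) dpath_ends T \<and> T \<subseteq> dpath_realized m \<sigma>}"
    using assms(1,2) by (rule paired_instances_dpath)
  show ?thesis
    by (rule success_le_potential[OF \<open>0 < \<theta>\<close> depth])
      (use success dpath_realized_conn_spanning[OF \<open>1 \<le> m\<close>] in \<open>simp add: success_prob_eq_integral\<close>)
qed

lemma dpath_queries_lower_bound:
  fixes m q :: nat and A :: "nat qtree pmf"
  assumes p: "0 < p" "p < 1" and l: "l = ln (1 / p)"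
    and "1 / l^2 \<le> real (m div 2)" "2 / l \<le> real (m div 2)" "12 * l \<le> ln (real (m div 2))"
    and "9 \<le> m"
    and depth: "\<forall>t\<in>set_pmf A. depth t \<le> q"
    and success: "\<forall>H. conn_spanning (dpath_V m) (dpath_E m) dpath_ends H \<longrightarrow>
      1 - 1 / 2 \<le> success_prob p (dpath_V m) (dpath_E m) dpath_ends A H"
  shows "1 / (72 * l) * m * ln m \<le> q"
proof -
  define n where "n = m div 2"
  have "0 < l"
    using p l by simp
  have "2 \<le> n * l"
    using assms(5) \<open>0 < l\<close> by (simp add: n_def field_simps)
  define \<theta> where "\<theta> = 1 / (n * l)"
  have "0 < \<theta>" "\<theta> < 1"
    using \<open>2 \<le> n * l\<close> by (auto simp: \<theta>_def)
  have "(1 - 1 / 2) * 3 ^ n \<le> exp (\<theta> * ln (1 / p) * q) * pair_potential \<theta> (\<lambda>_. 1) ^ n"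
    unfolding n_def using \<open>9 \<le> m\<close> by (intro dpath_success_le_potential[OF p \<open>0 < \<theta>\<close> _ depth success]) simp
  moreover have "\<theta> * ln (1 / p) * q = q / n"
    using \<open>0 < l\<close> unfolding \<theta>_def l[symmetric] by simp
  moreover have "pair_potential \<theta> (\<lambda>_. 1) = 3 - ln (n * l) / (n * l)"
    using pair_potential_unit[OF \<open>0 < \<theta>\<close> \<open>\<theta> < 1\<close>] by (simp add: \<theta>_def)
  ultimately have "n * (ln (n * l) / (3 * l) - ln 2) \<le> q"
    by (intro queries_ge_of_potential_bound[OF \<open>0 < l\<close> \<open>2 \<le> n * l\<close>]) simp
  moreover have "real m \<le> 2 * real n + 1"
    unfolding n_def by linarith
  ultimately show ?thesis
    using assms(4-7) \<open>0 < l\<close> unfolding n_def by (intro m_ln_m_le_of_n_ln_bound) auto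
qed

lemma eventually_m_div_2_large:
  assumes "0 < l"
  shows "eventually (\<lambda>m. 1 / l^2 \<le> real (m div 2) \<and> 2 / l \<le> real (m div 2)
    \<and> 12 * l \<le> ln (real (m div 2)) \<and> 9 \<le> m) sequentially"
proof -
  define N where "N = nat \<lceil>1 / l^2 + 2 / l + exp (12 * l)\<rceil>"
  have "1 / l^2 \<le> real (m div 2) \<and> 2 / l \<le> real (m div 2) \<and> 12 * l \<le> ln (real (m div 2)) \<and> 9 \<le> m"
    if "2 * N + 9 \<le> m" for m :: nat
  proof -
    have "1 / l^2 + 2 / l + exp (12 * l) \<le> real (m div 2)"
      using real_nat_ceiling_ge[of "1 / l^2 + 2 / l + exp (12 * l)"] that
      unfolding N_def by linarith
    moreover have "0 \<le> 1 / l^2" "0 \<le> 2 / l" "0 < exp (12 * l)"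
      using assms by auto
    ultimately have "1 / l^2 \<le> real (m div 2)" "2 / l \<le> real (m div 2)"
      "0 < real (m div 2)" "exp (12 * l) \<le> real (m div 2)"
      by linarith+
    then show ?thesis
      using ln_ge_iff[of "real (m div 2)" "12 * l"] that by auto
  qed
  then show ?thesis
    unfolding eventually_sequentially by blast
qed

theorem lemma8:
  fixes p :: real
  assumes "0 < p" and "p < 1/2"
  shows "\<exists>\<delta>>0. \<exists>c>0. \<exists>M::nat. \<forall>m\<ge>M.
    \<exists>(V::nat set) (E::nat set) (ends::nat \<Rightarrow> nat set).
      multigraph V E ends \<and> card E = m \<and>
      (\<forall>(A::nat qtree pmf) (q::nat).
         (\<forall>t\<in>set_pmf A. depth t \<le> q) \<and>
         (\<forall>H. conn_spanning V E ends H \<longrightarrow> success_prob p V E ends A H \<ge> 1 - \<delta>)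
         \<longrightarrow> real q \<ge> c * real m * ln (real m))"
proof -
  define l where "l = ln (1 / p)"
  have "0 < l"
    using assms by (simp add: l_def)
  obtain M where large: "\<And>m. M \<le> m \<Longrightarrow> 1 / l^2 \<le> real (m div 2) \<and> 2 / l \<le> real (m div 2)
      \<and> 12 * l \<le> ln (real (m div 2)) \<and> 9 \<le> m"
    using eventually_m_div_2_large[OF \<open>0 < l\<close>] unfolding eventually_sequentially by blast
  have dpath_bound: "\<forall>m\<ge>M. multigraph (dpath_V m) (dpath_E m) dpath_ends \<and> card (dpath_E m) = m \<and>
    (\<forall>(A::nat qtree pmf) q. (\<forall>t\<in>set_pmf A. depth t \<le> q) \<and>
       (\<forall>H. conn_spanning (dpath_V m) (dpath_E m) dpath_ends H \<longrightarrow>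
          success_prob p (dpath_V m) (dpath_E m) dpath_ends A H \<ge> 1 - 1 / 2)
       \<longrightarrow> real q \<ge> 1 / (72 * l) * real m * ln (real m))"
    using large assms(2)
    by (intro allI impI conjI dpath_multigraph dpath_queries_lower_bound[OF assms(1) _ l_def])
      (auto simp: dpath_E_def)
  show ?thesis
    by (rule exI[of _ "1 / 2"], rule conjI, simp, rule exI[of _ "1 / (72 * l)"], rule conjI,
      use \<open>0 < l\<close> in simp, rule exI[of _ M], use dpath_bound in blast)
qed

end
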